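(* Let $\mathcal{G}$ be an MVPP optional-grabbing pawn game with pawns $[d]$, let $\langle v,P\rangle$ be a configuration, let $j\in[d]$ be the pawn with $v\in V_j$, and let $P'\subseteq P$. (1) If ($j\in P$ implies $j\in P'$) and Player 1 wins from $\langle v,P\rangle$, then Player 1 wins from $\langle v,P'\rangle$. (2) If ($j\notin P'$ implies $j\notin P$) and Player 2 wins from $\langle v,P'\rangle$, then Player 2 wins from $\langle v,P\rangle$.
   Context: A pawn game with $d$ pawns consists of a finite directed graph $(V,E)$, a target set $T\subseteq V$, and sets $V_1,\dots,V_d\subseteq V$, where Pawn $j$ owns the vertices in $V_j$. In an MVPP (multiple vertices per pawn) game, $V_1,\dots,V_d$ form a partition of $V$. A configuration is a pair $\langle v,P\rangle$ with $v\in V$ the token position and $P\subseteq[d]$ the set of pawns controlled by Player 1 (Player 2 controls the rest). At $\langle v,P\rangle$, Player 1 moves the token iff he controls the pawn owning $v$; otherwise Player 2 moves. The mover moves the token to some $u$ with $(v,u)\in E$. Under optional grabbing, after Player $i$ moves, the other player may either leave pawn control unchanged or take one pawn currently controlled by Player $i$ into his own control. Player 1 wins a play iff it visits $T$; otherwise Player 2 wins. A player wins from a configuration if he has a strategy winning against all opponent strategies. *)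

theory Defs
  imports Main
begin

text \<open>MVPP pawn games with optional grabbing.  Pawns are 1..d.  Since in an MVPP
game the sets V_1..V_d partition V, the game is given by the owner function
own: own v = j iff v is in V_j.\<close>

record 'v pawn_game =
  V :: "'v set"
  E :: "('v \<times> 'v) set"
  T :: "'v set"
  d :: nat
  own :: "'v \<Rightarrow> nat"

type_synonym 'v config = "'v \<times> nat set"

definition mvpp_game :: "'v pawn_game \<Rightarrow> bool" where
  "mvpp_game G \<longleftrightarrow> finite (V G) \<and> E G \<subseteq> V G \<times> V G \<and> T G \<subseteq> V G
     \<and> (\<forall>v\<in>V G. own G v \<in> {1..d G})
     \<and> (\<forall>v\<in>V G. \<exists>u. (v,u) \<in> E G)"

text \<open>A strategy (for either player) consists of a move function (history to next vertex),
used when the player is the mover, and a grab function (history and the vertex just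
moved to, giving the new set of Player-1 pawns), used when the opponent was the mover.\<close>

type_synonym 'v strategy = "('v config list \<Rightarrow> 'v) \<times> ('v config list \<Rightarrow> 'v \<Rightarrow> nat set)"

definition legal1 :: "'v pawn_game \<Rightarrow> 'v strategy \<Rightarrow> bool" where
  "legal1 G s \<longleftrightarrow> (\<forall>h v P. h \<noteq> [] \<longrightarrow> last h = (v,P) \<longrightarrow> v \<in> V G \<longrightarrow>
      (own G v \<in> P \<longrightarrow> (v, fst s h) \<in> E G) \<and>
      (own G v \<notin> P \<longrightarrow> (\<forall>u. snd s h u = P \<or> (\<exists>k\<in>{1..d G} - P. snd s h u = insert k P))))"

definition legal2 :: "'v pawn_game \<Rightarrow> 'v strategy \<Rightarrow> bool" where
  "legal2 G s \<longleftrightarrow> (\<forall>h v P. h \<noteq> [] \<longrightarrow> last h = (v,P) \<longrightarrow> v \<in> V G \<longrightarrow>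
      (own G v \<notin> P \<longrightarrow> (v, fst s h) \<in> E G) \<and>
      (own G v \<in> P \<longrightarrow> (\<forall>u. snd s h u = P \<or> (\<exists>k\<in>P. snd s h u = P - {k}))))"

definition step :: "'v pawn_game \<Rightarrow> 'v strategy \<Rightarrow> 'v strategy \<Rightarrow> 'v config list \<Rightarrow> 'v config" where
  "step G s1 s2 h = (let (v,P) = last h in
     if own G v \<in> P then (let u = fst s1 h in (u, snd s2 h u))
     else (let u = fst s2 h in (u, snd s1 h u)))"

fun hist :: "'v pawn_game \<Rightarrow> 'v strategy \<Rightarrow> 'v strategy \<Rightarrow> 'v config \<Rightarrow> nat \<Rightarrow> 'v config list" where
  "hist G s1 s2 c 0 = [c]"
| "hist G s1 s2 c (Suc n) = hist G s1 s2 c n @ [step G s1 s2 (hist G s1 s2 c n)]"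

definition play :: "'v pawn_game \<Rightarrow> 'v strategy \<Rightarrow> 'v strategy \<Rightarrow> 'v config \<Rightarrow> nat \<Rightarrow> 'v config" where
  "play G s1 s2 c n = last (hist G s1 s2 c n)"

definition wins1 :: "'v pawn_game \<Rightarrow> 'v config \<Rightarrow> bool" where
  "wins1 G c \<longleftrightarrow> (\<exists>s1. legal1 G s1 \<and> (\<forall>s2. legal2 G s2 \<longrightarrow> (\<exists>n. fst (play G s1 s2 c n) \<in> T G)))"

definition wins2 :: "'v pawn_game \<Rightarrow> 'v config \<Rightarrow> bool" where
  "wins2 G c \<longleftrightarrow> (\<exists>s2. legal2 G s2 \<and> (\<forall>s1. legal1 G s1 \<longrightarrow> (\<forall>n. fst (play G s1 s2 c n) \<notin> T G)))"

end

theory Submission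
  imports Defs
begin

(* Let c = <v, P'> and c' = <v, P> with P' a subset of P and the same player moving at v.
   Player 1 plays from c by running a winning strategy s for c' on a shadow play that visits
   the same vertices, keeping the invariant that his real pawns are among his shadow pawns and
   that the pawn of the current vertex belongs to the same player in both plays.  When he
   moves, the shadow opponent grabs the pawn of the new vertex exactly if the real opponent
   holds it and the shadow Player 1 does not; when Player 2 moves, Player 1 grabs the pawn of
   the new vertex exactly if s holds it in the shadow.  The shadow play is a play of s against
   a legal opponent (one that replays it), so it reaches T, and with it the real play.
   Player 2's half is symmetric, with the safety objective in place of reachability. *)

lemma mvpp_game_edge_target: "mvpp_game G \<Longrightarrow> (u, w) \<in> E G \<Longrightarrow> w \<in> V G"
  by (auto simp: mvpp_game_def)

lemma mvpp_game_own: "mvpp_game G \<Longrightarrow> u \<in> V G \<Longrightarrow> own G u \<in> {1..d G}"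
  by (auto simp: mvpp_game_def)

(* The fallback only matters off the simulated play, where it keeps strategies legal. *)
definition legal_move :: "'v pawn_game \<Rightarrow> 'v \<Rightarrow> 'v \<Rightarrow> 'v" where
  "legal_move G u w = (if (u, w) \<in> E G then w else (SOME w'. (u, w') \<in> E G))"

lemma legal_move_edge:
  assumes "mvpp_game G" and "u \<in> V G"
  shows "(u, legal_move G u w) \<in> E G"
  using assms by (auto simp: legal_move_def mvpp_game_def intro: someI_ex)

lemma legal_move_eq: "(u, w) \<in> E G \<Longrightarrow> legal_move G u w = w"
  by (simp add: legal_move_def)

definition grab1_step :: "'v pawn_game \<Rightarrow> nat set \<Rightarrow> nat set \<Rightarrow> bool" where
  "grab1_step G P Q \<longleftrightarrow> Q = P \<or> (\<exists>k\<in>{1..d G} - P. Q = insert k P)"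

definition grab2_step :: "nat set \<Rightarrow> nat set \<Rightarrow> bool" where
  "grab2_step P Q \<longleftrightarrow> Q = P \<or> (\<exists>k\<in>P. Q = P - {k})"

lemma grab1_step_subset: "grab1_step G P Q \<Longrightarrow> P \<subseteq> Q"
  by (auto simp: grab1_step_def)

lemma grab2_step_subset: "grab2_step P Q \<Longrightarrow> Q \<subseteq> P"
  by (auto simp: grab2_step_def)

lemma legal1_iff:
  "legal1 G s \<longleftrightarrow> (\<forall>h u P. h \<noteq> [] \<longrightarrow> last h = (u, P) \<longrightarrow> u \<in> V G \<longrightarrow>
      (own G u \<in> P \<longrightarrow> (u, fst s h) \<in> E G) \<and> (own G u \<notin> P \<longrightarrow> (\<forall>w. grab1_step G P (snd s h w))))"
  by (auto simp: legal1_def grab1_step_def)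

lemma legal2_iff:
  "legal2 G s \<longleftrightarrow> (\<forall>h u P. h \<noteq> [] \<longrightarrow> last h = (u, P) \<longrightarrow> u \<in> V G \<longrightarrow>
      (own G u \<notin> P \<longrightarrow> (u, fst s h) \<in> E G) \<and> (own G u \<in> P \<longrightarrow> (\<forall>w. grab2_step P (snd s h w))))"
  by (auto simp: legal2_def grab2_step_def)

lemma legal1_moveD:
  "legal1 G s \<Longrightarrow> h \<noteq> [] \<Longrightarrow> last h = (u, P) \<Longrightarrow> u \<in> V G \<Longrightarrow> own G u \<in> P \<Longrightarrow> (u, fst s h) \<in> E G"
  by (auto simp: legal1_iff)

lemma legal1_grabD:
  "legal1 G s \<Longrightarrow> h \<noteq> [] \<Longrightarrow> last h = (u, P) \<Longrightarrow> u \<in> V G \<Longrightarrow> own G u \<notin> P \<Longrightarrow> grab1_step G P (snd s h w)"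
  by (auto simp: legal1_iff)

lemma legal2_moveD:
  "legal2 G s \<Longrightarrow> h \<noteq> [] \<Longrightarrow> last h = (u, P) \<Longrightarrow> u \<in> V G \<Longrightarrow> own G u \<notin> P \<Longrightarrow> (u, fst s h) \<in> E G"
  by (auto simp: legal2_iff)

lemma legal2_grabD:
  "legal2 G s \<Longrightarrow> h \<noteq> [] \<Longrightarrow> last h = (u, P) \<Longrightarrow> u \<in> V G \<Longrightarrow> own G u \<in> P \<Longrightarrow> grab2_step P (snd s h w)"
  by (auto simp: legal2_iff)

lemma step_eq:
  "last h = (u, P) \<Longrightarrow> step G s1 s2 h =
     (if own G u \<in> P then (fst s1 h, snd s2 h (fst s1 h)) else (fst s2 h, snd s1 h (fst s2 h)))"
  by (simp add: step_def Let_def)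

lemma hist_eq_map_play: "hist G s1 s2 c n = map (play G s1 s2 c) [0..<Suc n]"
  by (induction n) (auto simp: play_def)

lemma play_0: "play G s1 s2 c 0 = c"
  by (simp add: play_def)

lemma play_Suc: "play G s1 s2 c (Suc n) = step G s1 s2 (map (play G s1 s2 c) [0..<Suc n])"
  unfolding play_def[of G s1 s2 c "Suc n"] hist.simps last_snoc by (simp only: hist_eq_map_play)

definition winning1 :: "'v pawn_game \<Rightarrow> 'v strategy \<Rightarrow> 'v config \<Rightarrow> bool" where
  "winning1 G s c \<longleftrightarrow> legal1 G s \<and> (\<forall>t. legal2 G t \<longrightarrow> (\<exists>n. fst (play G s t c n) \<in> T G))"

definition winning2 :: "'v pawn_game \<Rightarrow> 'v strategy \<Rightarrow> 'v config \<Rightarrow> bool" where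
  "winning2 G s c \<longleftrightarrow> legal2 G s \<and> (\<forall>t. legal1 G t \<longrightarrow> (\<forall>n. fst (play G t s c n) \<notin> T G))"

lemma wins1_iff_winning1: "wins1 G c \<longleftrightarrow> (\<exists>s. winning1 G s c)"
  by (simp add: wins1_def winning1_def)

lemma wins2_iff_winning2: "wins2 G c \<longleftrightarrow> (\<exists>s. winning2 G s c)"
  by (simp add: wins2_def winning2_def)

definition follows1 :: "'v pawn_game \<Rightarrow> 'v strategy \<Rightarrow> 'v config list \<Rightarrow> 'v config \<Rightarrow> bool" where
  "follows1 G s h c \<longleftrightarrow> (case last h of (u, P) \<Rightarrow>
     if own G u \<in> P then fst c = fst s h \<and> grab2_step P (snd c)
     else (u, fst c) \<in> E G \<and> snd c = snd s h (fst c))"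

definition follows2 :: "'v pawn_game \<Rightarrow> 'v strategy \<Rightarrow> 'v config list \<Rightarrow> 'v config \<Rightarrow> bool" where
  "follows2 G s h c \<longleftrightarrow> (case last h of (u, P) \<Rightarrow>
     if own G u \<in> P then (u, fst c) \<in> E G \<and> snd c = snd s h (fst c)
     else fst c = fst s h \<and> grab1_step G P (snd c))"

definition replay1 :: "'v pawn_game \<Rightarrow> (nat \<Rightarrow> 'v config) \<Rightarrow> 'v strategy" where
  "replay1 G \<rho> = (\<lambda>h. legal_move G (fst (last h)) (fst (\<rho> (length h))),
     \<lambda>h w. if grab1_step G (snd (last h)) (snd (\<rho> (length h))) then snd (\<rho> (length h)) else snd (last h))"

definition replay2 :: "'v pawn_game \<Rightarrow> (nat \<Rightarrow> 'v config) \<Rightarrow> 'v strategy" where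
  "replay2 G \<rho> = (\<lambda>h. legal_move G (fst (last h)) (fst (\<rho> (length h))),
     \<lambda>h w. if grab2_step (snd (last h)) (snd (\<rho> (length h))) then snd (\<rho> (length h)) else snd (last h))"

lemma legal1_replay1: "mvpp_game G \<Longrightarrow> legal1 G (replay1 G \<rho>)"
  by (auto simp: legal1_iff replay1_def grab1_step_def intro: legal_move_edge)

lemma legal2_replay2: "mvpp_game G \<Longrightarrow> legal2 G (replay2 G \<rho>)"
  by (auto simp: legal2_iff replay2_def grab2_step_def intro: legal_move_edge)

lemma play_replay2:
  assumes "\<And>n. follows1 G s (map \<rho> [0..<Suc n]) (\<rho> (Suc n))"
  shows "play G s (replay2 G \<rho>) (\<rho> 0) n = \<rho> n"
proof (induction n rule: less_induct)
  case (less n)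
  show ?case
  proof (cases n)
    case (Suc m)
    define h where "h = map \<rho> [0..<Suc m]"
    have "map (play G s (replay2 G \<rho>) (\<rho> 0)) [0..<Suc m] = h"
      using less Suc by (simp add: h_def)
    moreover have "step G s (replay2 G \<rho>) h = \<rho> (Suc m)"
      using assms[of m] unfolding h_def[symmetric]
      by (cases "last h"; cases "\<rho> (Suc m)")
        (auto simp: follows1_def step_eq replay2_def legal_move_eq h_def)
    ultimately show ?thesis
      using Suc by (simp add: play_Suc)
  qed (simp add: play_0)
qed

lemma play_replay1:
  assumes "\<And>n. follows2 G s (map \<rho> [0..<Suc n]) (\<rho> (Suc n))"
  shows "play G (replay1 G \<rho>) s (\<rho> 0) n = \<rho> n"
proof (induction n rule: less_induct)
  case (less n)
  show ?case
  proof (cases n)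
    case (Suc m)
    define h where "h = map \<rho> [0..<Suc m]"
    have "map (play G (replay1 G \<rho>) s (\<rho> 0)) [0..<Suc m] = h"
      using less Suc by (simp add: h_def)
    moreover have "step G (replay1 G \<rho>) s h = \<rho> (Suc m)"
      using assms[of m] unfolding h_def[symmetric]
      by (cases "last h"; cases "\<rho> (Suc m)")
        (auto simp: follows2_def step_eq replay1_def legal_move_eq h_def)
    ultimately show ?thesis
      using Suc by (simp add: play_Suc)
  qed (simp add: play_0)
qed

lemma winning1_follows1_reaches_target:
  assumes "mvpp_game G" and "winning1 G s (\<rho> 0)"
    and "\<And>n. follows1 G s (map \<rho> [0..<Suc n]) (\<rho> (Suc n))"
  shows "\<exists>n. fst (\<rho> n) \<in> T G"
  using assms legal2_replay2[OF assms(1)] play_replay2[OF assms(3)]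
  unfolding winning1_def by metis

lemma winning2_follows2_avoids_target:
  assumes "mvpp_game G" and "winning2 G s (\<rho> 0)"
    and "\<And>n. follows2 G s (map \<rho> [0..<Suc n]) (\<rho> (Suc n))"
  shows "fst (\<rho> n) \<notin> T G"
  using assms legal1_replay1[OF assms(1)] play_replay1[OF assms(3)]
  unfolding winning2_def by metis

definition shadow :: "('v config list \<Rightarrow> 'v config \<Rightarrow> nat set) \<Rightarrow> nat set \<Rightarrow> 'v config list \<Rightarrow> 'v config list" where
  "shadow g P h = foldl (\<lambda>sh c. sh @ [(fst c, g sh c)]) [(fst (hd h), P)] (tl h)"

lemma shadow_snoc:
  "h \<noteq> [] \<Longrightarrow> shadow g P (h @ [c]) = shadow g P h @ [(fst c, g (shadow g P h) c)]"
  by (cases h) (simp_all add: shadow_def)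

definition shadow_seq :: "('v config list \<Rightarrow> 'v config \<Rightarrow> nat set) \<Rightarrow> nat set \<Rightarrow> (nat \<Rightarrow> 'v config) \<Rightarrow> nat \<Rightarrow> 'v config" where
  "shadow_seq g P \<rho> n = last (shadow g P (map \<rho> [0..<Suc n]))"

lemma shadow_upt_Suc:
  "shadow g P (map \<rho> [0..<Suc (Suc n)]) =
     shadow g P (map \<rho> [0..<Suc n]) @ [(fst (\<rho> (Suc n)), g (shadow g P (map \<rho> [0..<Suc n])) (\<rho> (Suc n)))]"
  using shadow_snoc[of "map \<rho> [0..<Suc n]" g P "\<rho> (Suc n)"] by simp

lemma last_shadow_upt_Suc:
  "last (shadow g P (map \<rho> [0..<Suc (Suc n)])) = (fst (\<rho> (Suc n)), g (shadow g P (map \<rho> [0..<Suc n])) (\<rho> (Suc n)))"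
  by (simp only: shadow_upt_Suc last_snoc)

lemma shadow_map_upt: "shadow g P (map \<rho> [0..<Suc n]) = map (shadow_seq g P \<rho>) [0..<Suc n]"
proof (induction n)
  case 0
  then show ?case by (simp add: shadow_seq_def shadow_def)
next
  case (Suc n)
  have "shadow_seq g P \<rho> (Suc n) = (fst (\<rho> (Suc n)), g (shadow g P (map \<rho> [0..<Suc n])) (\<rho> (Suc n)))"
    unfolding shadow_seq_def by (rule last_shadow_upt_Suc)
  moreover have "map (shadow_seq g P \<rho>) [0..<Suc (Suc n)] = map (shadow_seq g P \<rho>) [0..<Suc n] @ [shadow_seq g P \<rho> (Suc n)]"
    by simp
  ultimately show ?case
    by (simp only: shadow_upt_Suc Suc.IH)
qed

lemma shadow_seq_0: "shadow_seq g P \<rho> 0 = (fst (\<rho> 0), P)"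
  by (simp add: shadow_seq_def shadow_def)

lemma shadow_seq_Suc:
  "shadow_seq g P \<rho> (Suc n) = (fst (\<rho> (Suc n)), g (map (shadow_seq g P \<rho>) [0..<Suc n]) (\<rho> (Suc n)))"
  unfolding shadow_seq_def[of g P \<rho> "Suc n"] last_shadow_upt_Suc
  by (simp only: shadow_map_upt)

definition fewer_pawns1 :: "'v pawn_game \<Rightarrow> 'v config \<Rightarrow> 'v config \<Rightarrow> bool" where
  "fewer_pawns1 G c c' \<longleftrightarrow>
     fst c = fst c' \<and> snd c \<subseteq> snd c' \<and> (own G (fst c) \<in> snd c \<longleftrightarrow> own G (fst c) \<in> snd c')"

(* Keeping the current vertex's owner in the same hands is the only constraint, so the shadow
   opponent grabs at most the pawn of the new vertex. *)
definition shadow_grab1 :: "'v pawn_game \<Rightarrow> 'v strategy \<Rightarrow> 'v config list \<Rightarrow> 'v config \<Rightarrow> nat set" where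
  "shadow_grab1 G s sh c = (case last sh of (u, Q) \<Rightarrow> let j = own G (fst c) in
     if own G u \<in> Q then (if j \<in> Q \<and> j \<notin> snd c then Q - {j} else Q)
     else snd s sh (fst c))"

definition sim1 :: "'v pawn_game \<Rightarrow> 'v strategy \<Rightarrow> nat set \<Rightarrow> 'v strategy" where
  "sim1 G s P = (\<lambda>h. legal_move G (fst (last h)) (fst s (shadow (shadow_grab1 G s) P h)),
     \<lambda>h w. let j = own G w; Q = snd (last h) in
       if j \<in> snd s (shadow (shadow_grab1 G s) P h) w \<and> j \<notin> Q \<and> j \<in> {1..d G} then insert j Q else Q)"

lemma legal1_sim1: "mvpp_game G \<Longrightarrow> legal1 G (sim1 G s P)"
  by (auto simp: legal1_iff sim1_def grab1_step_def Let_def intro: legal_move_edge)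

lemma sim1_step:
  assumes G: "mvpp_game G" and s: "legal1 G s" and t: "legal2 G t"
    and h: "h \<noteq> []" "fst (last h) \<in> V G"
    and sh: "sh = shadow (shadow_grab1 G s) P h" "sh \<noteq> []"
    and le: "fewer_pawns1 G (last h) (last sh)"
  defines "c \<equiv> step G (sim1 G s P) t h"
  shows "fst c \<in> V G \<and> fewer_pawns1 G c (fst c, shadow_grab1 G s sh c)
    \<and> follows1 G s sh (fst c, shadow_grab1 G s sh c)"
proof -
  obtain u Q' Q where lh: "last h = (u, Q')" and ls: "last sh = (u, Q)"
    using le unfolding fewer_pawns1_def by (metis prod.collapse)
  have uV: "u \<in> V G" using h lh by simp
  have sub: "Q' \<subseteq> Q" and mover: "own G u \<in> Q' \<longleftrightarrow> own G u \<in> Q"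
    using le lh ls by (auto simp: fewer_pawns1_def)
  show ?thesis
  proof (cases "own G u \<in> Q")
    case True
    define w where "w = fst s sh"
    define Qt where "Qt = snd t h w"
    have edge: "(u, w) \<in> E G" using legal1_moveD[OF s sh(2) ls uV True] by (simp add: w_def)
    have grab: "grab2_step Q' Qt" using legal2_grabD[OF t h(1) lh uV] True mover by (simp add: Qt_def)
    have c: "c = (w, Qt)"
      using True mover edge by (simp add: c_def step_eq[OF lh] sim1_def lh legal_move_eq sh(1) w_def Qt_def)
    have "shadow_grab1 G s sh c = (if own G w \<in> Q \<and> own G w \<notin> Qt then Q - {own G w} else Q)"
      using True by (simp add: shadow_grab1_def ls c Let_def)
    then show ?thesis
      using c True sub grab2_step_subset[OF grab] mvpp_game_edge_target[OF G edge]
      by (auto simp: fewer_pawns1_def follows1_def ls w_def grab2_step_def)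
  next
    case False
    define w where "w = fst t h"
    define Qs where "Qs = snd s sh w"
    have edge: "(u, w) \<in> E G" using legal2_moveD[OF t h(1) lh uV] False mover by (simp add: w_def)
    have grab: "grab1_step G Q Qs" using legal1_grabD[OF s sh(2) ls uV False] by (simp add: Qs_def)
    have wV: "w \<in> V G" using mvpp_game_edge_target[OF G edge] .
    have c: "c = (w, if own G w \<in> Qs \<and> own G w \<notin> Q' \<and> own G w \<in> {1..d G} then insert (own G w) Q' else Q')"
      using False mover by (simp add: c_def step_eq[OF lh] sim1_def lh sh(1) w_def Qs_def Let_def)
    have "shadow_grab1 G s sh c = Qs"
      using False by (simp add: shadow_grab1_def ls c Qs_def)
    then show ?thesis
      using c False edge wV sub grab1_step_subset[OF grab] mvpp_game_own[OF G wV]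
      by (auto simp: fewer_pawns1_def follows1_def ls Qs_def)
  qed
qed

lemma sim1_play:
  assumes G: "mvpp_game G" and s: "legal1 G s" and t: "legal2 G t"
    and c: "fst c \<in> V G" "fewer_pawns1 G c c'"
  defines "\<rho> \<equiv> play G (sim1 G s (snd c')) t c"
    and "\<sigma> \<equiv> shadow_seq (shadow_grab1 G s) (snd c') (play G (sim1 G s (snd c')) t c)"
  shows "\<sigma> 0 = c'"
    and "fst (\<rho> n) \<in> V G \<and> fewer_pawns1 G (\<rho> n) (\<sigma> n)"
    and "follows1 G s (map \<sigma> [0..<Suc n]) (\<sigma> (Suc n))"
proof -
  have step: "fst (\<rho> (Suc n)) \<in> V G \<and> fewer_pawns1 G (\<rho> (Suc n)) (\<sigma> (Suc n))
      \<and> follows1 G s (map \<sigma> [0..<Suc n]) (\<sigma> (Suc n))"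
    if "fst (\<rho> n) \<in> V G \<and> fewer_pawns1 G (\<rho> n) (\<sigma> n)" for n
  proof -
    define h where "h = map \<rho> [0..<Suc n]"
    define sh where "sh = map \<sigma> [0..<Suc n]"
    have last: "last h = \<rho> n" "last sh = \<sigma> n" and ne: "h \<noteq> []" "sh \<noteq> []"
      by (simp_all add: h_def sh_def)
    have sh_eq: "sh = shadow (shadow_grab1 G s) (snd c') h"
      by (simp only: h_def sh_def \<sigma>_def \<rho>_def shadow_map_upt)
    have \<rho>_Suc: "step G (sim1 G s (snd c')) t h = \<rho> (Suc n)"
      by (simp only: h_def \<rho>_def play_Suc)
    have \<sigma>_Suc: "(fst (\<rho> (Suc n)), shadow_grab1 G s sh (\<rho> (Suc n))) = \<sigma> (Suc n)"
      by (simp only: sh_def \<sigma>_def \<rho>_def shadow_seq_Suc)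
    show ?thesis
      using sim1_step[OF G s t ne(1) _ sh_eq ne(2)] that
      unfolding last \<rho>_Suc \<sigma>_Suc sh_def[symmetric] by simp
  qed
  show "\<sigma> 0 = c'"
    using c(2) by (simp add: \<sigma>_def play_0 shadow_seq_0 fewer_pawns1_def)
  then have "fst (\<rho> 0) \<in> V G \<and> fewer_pawns1 G (\<rho> 0) (\<sigma> 0)"
    using c by (simp add: \<rho>_def play_0)
  then show inv: "fst (\<rho> n) \<in> V G \<and> fewer_pawns1 G (\<rho> n) (\<sigma> n)" for n
    by (induction n) (simp_all add: step)
  show "follows1 G s (map \<sigma> [0..<Suc n]) (\<sigma> (Suc n))"
    using step[OF inv] by simp
qed

lemma wins1_fewer_pawns1:
  assumes G: "mvpp_game G" and c: "fst c \<in> V G" "fewer_pawns1 G c c'" and "wins1 G c'"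
  shows "wins1 G c"
proof -
  obtain s where s: "winning1 G s c'"
    using \<open>wins1 G c'\<close> by (auto simp: wins1_iff_winning1)
  have "winning1 G (sim1 G s (snd c')) c"
    unfolding winning1_def
  proof (intro conjI allI impI)
    show "legal1 G (sim1 G s (snd c'))" using G by (rule legal1_sim1)
    fix t assume t: "legal2 G t"
    have s_legal: "legal1 G s" using s by (simp add: winning1_def)
    note sim = sim1_play[OF G s_legal t c]
    obtain n where "fst (shadow_seq (shadow_grab1 G s) (snd c') (play G (sim1 G s (snd c')) t c) n) \<in> T G"
      using winning1_follows1_reaches_target[OF G] s sim by metis
    then have "fst (play G (sim1 G s (snd c')) t c n) \<in> T G"
      using sim(2)[of n] by (simp add: fewer_pawns1_def)
    then show "\<exists>n. fst (play G (sim1 G s (snd c')) t c n) \<in> T G" ..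
  qed
  then show ?thesis unfolding wins1_iff_winning1 by blast
qed

definition shadow_grab2 :: "'v pawn_game \<Rightarrow> 'v strategy \<Rightarrow> 'v config list \<Rightarrow> 'v config \<Rightarrow> nat set" where
  "shadow_grab2 G s sh c = (case last sh of (u, Q) \<Rightarrow> let j = own G (fst c) in
     if own G u \<in> Q then snd s sh (fst c)
     else (if j \<in> snd c \<and> j \<notin> Q then insert j Q else Q))"

definition sim2 :: "'v pawn_game \<Rightarrow> 'v strategy \<Rightarrow> nat set \<Rightarrow> 'v strategy" where
  "sim2 G s P = (\<lambda>h. legal_move G (fst (last h)) (fst s (shadow (shadow_grab2 G s) P h)),
     \<lambda>h w. let j = own G w; Q = snd (last h) in
       if j \<in> Q \<and> j \<notin> snd s (shadow (shadow_grab2 G s) P h) w then Q - {j} else Q)"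

lemma legal2_sim2: "mvpp_game G \<Longrightarrow> legal2 G (sim2 G s P)"
  by (auto simp: legal2_iff sim2_def grab2_step_def Let_def intro: legal_move_edge)

lemma sim2_step:
  assumes G: "mvpp_game G" and s: "legal2 G s" and t: "legal1 G t"
    and h: "h \<noteq> []" "fst (last h) \<in> V G"
    and sh: "sh = shadow (shadow_grab2 G s) P h" "sh \<noteq> []"
    and le: "fewer_pawns1 G (last sh) (last h)"
  defines "c \<equiv> step G t (sim2 G s P) h"
  shows "fst c \<in> V G \<and> fewer_pawns1 G (fst c, shadow_grab2 G s sh c) c
    \<and> follows2 G s sh (fst c, shadow_grab2 G s sh c)"
proof -
  obtain u Q' Q where lh: "last h = (u, Q)" and ls: "last sh = (u, Q')"
    using le unfolding fewer_pawns1_def by (metis prod.collapse)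
  have uV: "u \<in> V G" using h lh by simp
  have sub: "Q' \<subseteq> Q" and mover: "own G u \<in> Q' \<longleftrightarrow> own G u \<in> Q"
    using le lh ls by (auto simp: fewer_pawns1_def)
  show ?thesis
  proof (cases "own G u \<in> Q'")
    case True
    define w where "w = fst t h"
    define Qs where "Qs = snd s sh w"
    have edge: "(u, w) \<in> E G" using legal1_moveD[OF t h(1) lh uV] True mover by (simp add: w_def)
    have grab: "grab2_step Q' Qs" using legal2_grabD[OF s sh(2) ls uV True] by (simp add: Qs_def)
    have c: "c = (w, if own G w \<in> Q \<and> own G w \<notin> Qs then Q - {own G w} else Q)"
      using True mover by (simp add: c_def step_eq[OF lh] sim2_def lh sh(1) w_def Qs_def Let_def)
    have "shadow_grab2 G s sh c = Qs"
      using True by (simp add: shadow_grab2_def ls c Qs_def)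
    then show ?thesis
      using c True edge mvpp_game_edge_target[OF G edge] sub grab2_step_subset[OF grab]
      by (auto simp: fewer_pawns1_def follows2_def ls Qs_def)
  next
    case False
    define w where "w = fst s sh"
    define Qt where "Qt = snd t h w"
    have edge: "(u, w) \<in> E G" using legal2_moveD[OF s sh(2) ls uV False] by (simp add: w_def)
    have grab: "grab1_step G Q Qt" using legal1_grabD[OF t h(1) lh uV] False mover by (simp add: Qt_def)
    have wV: "w \<in> V G" using mvpp_game_edge_target[OF G edge] .
    have c: "c = (w, Qt)"
      using False mover edge by (simp add: c_def step_eq[OF lh] sim2_def lh legal_move_eq sh(1) w_def Qt_def)
    have "shadow_grab2 G s sh c = (if own G w \<in> Qt \<and> own G w \<notin> Q' then insert (own G w) Q' else Q')"
      using False by (simp add: shadow_grab2_def ls c Let_def)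
    then show ?thesis
      using c False wV sub grab1_step_subset[OF grab] mvpp_game_own[OF G wV]
      by (auto simp: fewer_pawns1_def follows2_def ls w_def grab1_step_def)
  qed
qed

lemma sim2_play:
  assumes G: "mvpp_game G" and s: "legal2 G s" and t: "legal1 G t"
    and c: "fst c' \<in> V G" "fewer_pawns1 G c c'"
  defines "\<rho> \<equiv> play G t (sim2 G s (snd c)) c'"
    and "\<sigma> \<equiv> shadow_seq (shadow_grab2 G s) (snd c) (play G t (sim2 G s (snd c)) c')"
  shows "\<sigma> 0 = c"
    and "fst (\<rho> n) \<in> V G \<and> fewer_pawns1 G (\<sigma> n) (\<rho> n)"
    and "follows2 G s (map \<sigma> [0..<Suc n]) (\<sigma> (Suc n))"
proof -
  have step: "fst (\<rho> (Suc n)) \<in> V G \<and> fewer_pawns1 G (\<sigma> (Suc n)) (\<rho> (Suc n))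
      \<and> follows2 G s (map \<sigma> [0..<Suc n]) (\<sigma> (Suc n))"
    if "fst (\<rho> n) \<in> V G \<and> fewer_pawns1 G (\<sigma> n) (\<rho> n)" for n
  proof -
    define h where "h = map \<rho> [0..<Suc n]"
    define sh where "sh = map \<sigma> [0..<Suc n]"
    have last: "last h = \<rho> n" "last sh = \<sigma> n" and ne: "h \<noteq> []" "sh \<noteq> []"
      by (simp_all add: h_def sh_def)
    have sh_eq: "sh = shadow (shadow_grab2 G s) (snd c) h"
      by (simp only: h_def sh_def \<sigma>_def \<rho>_def shadow_map_upt)
    have \<rho>_Suc: "step G t (sim2 G s (snd c)) h = \<rho> (Suc n)"
      by (simp only: h_def \<rho>_def play_Suc)
    have \<sigma>_Suc: "(fst (\<rho> (Suc n)), shadow_grab2 G s sh (\<rho> (Suc n))) = \<sigma> (Suc n)"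
      by (simp only: sh_def \<sigma>_def \<rho>_def shadow_seq_Suc)
    show ?thesis
      using sim2_step[OF G s t ne(1) _ sh_eq ne(2)] that
      unfolding last \<rho>_Suc \<sigma>_Suc sh_def[symmetric] by simp
  qed
  show "\<sigma> 0 = c"
    using c(2) by (simp add: \<sigma>_def play_0 shadow_seq_0 fewer_pawns1_def prod_eq_iff)
  then have "fst (\<rho> 0) \<in> V G \<and> fewer_pawns1 G (\<sigma> 0) (\<rho> 0)"
    using c by (simp add: \<rho>_def play_0)
  then show inv: "fst (\<rho> n) \<in> V G \<and> fewer_pawns1 G (\<sigma> n) (\<rho> n)" for n
    by (induction n) (simp_all add: step)
  show "follows2 G s (map \<sigma> [0..<Suc n]) (\<sigma> (Suc n))"
    using step[OF inv] by simp
qed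

lemma wins2_more_pawns1:
  assumes G: "mvpp_game G" and c: "fst c' \<in> V G" "fewer_pawns1 G c c'" and "wins2 G c"
  shows "wins2 G c'"
proof -
  obtain s where s: "winning2 G s c"
    using \<open>wins2 G c\<close> by (auto simp: wins2_iff_winning2)
  have "winning2 G (sim2 G s (snd c)) c'"
    unfolding winning2_def
  proof (intro conjI allI impI)
    show "legal2 G (sim2 G s (snd c))" using G by (rule legal2_sim2)
    fix t n assume t: "legal1 G t"
    have s_legal: "legal2 G s" using s by (simp add: winning2_def)
    note sim = sim2_play[OF G s_legal t c]
    have "fst (shadow_seq (shadow_grab2 G s) (snd c) (play G t (sim2 G s (snd c)) c') n) \<notin> T G"
      using winning2_follows2_avoids_target[OF G] s sim by metis
    then show "fst (play G t (sim2 G s (snd c)) c' n) \<notin> T G"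
      using sim(2)[of n] by (simp add: fewer_pawns1_def)
  qed
  then show ?thesis unfolding wins2_iff_winning2 by blast
qed

theorem theorem5:
  fixes G :: "'v pawn_game" and v :: 'v and P P' :: "nat set" and j :: nat
  assumes "mvpp_game G"
    and "v \<in> V G"
    and "P \<subseteq> {1..d G}"
    and "j = own G v"
    and "P' \<subseteq> P"
  shows "((j \<in> P \<longrightarrow> j \<in> P') \<and> wins1 G (v, P) \<longrightarrow> wins1 G (v, P'))
     \<and> ((j \<notin> P' \<longrightarrow> j \<notin> P) \<and> wins2 G (v, P') \<longrightarrow> wins2 G (v, P))"
proof (intro conjI impI)
  assume "(j \<in> P \<longrightarrow> j \<in> P') \<and> wins1 G (v, P)"
  then show "wins1 G (v, P')"
    using wins1_fewer_pawns1[OF assms(1), of "(v, P')" "(v, P)"] assms(2,4,5)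
    by (auto simp: fewer_pawns1_def)
next
  assume "(j \<notin> P' \<longrightarrow> j \<notin> P) \<and> wins2 G (v, P')"
  then show "wins2 G (v, P)"
    using wins2_more_pawns1[OF assms(1), of "(v, P)" "(v, P')"] assms(2,4,5)
    by (auto simp: fewer_pawns1_def)
qed

end
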